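(* Under the setting described in the context, there is a constant $C>0$ (independent of $x$ and $h$) such that for every $x\in\Omega$, every $0<h<1$ and each $j\in\{0,1\}$, $$\int_{\Omega}\left|\frac{x-t}{h}\right|^j \psi_h(x-t)\,d\mu(t)\le C.$$
   Context: Let $d\ge 1$ and let $\Omega\subset\mathbb{R}^d$ be a compact convex domain with Lipschitz boundary. Let $\mu$ be a probability measure on $\Omega$ such that: (1) there is a constant $C_1>0$, depending only on $\mu$ and $d$, with $\mu(\Omega\cap B(x,\alpha))\ge C_1\, m(B(x,\alpha))$ for all $x\in\Omega$ and $0<\alpha\le 1$, where $B(x,\alpha)$ is the Euclidean ball of radius $\alpha$ centered at $x$ and $m$ is Lebesgue measure; (2) $\mu$ extends to a finite positive measure $\mu^*$ on $\mathbb{R}^d$ whose Fourier transform $\widehat{\mu^*}(\xi)=\int_{\mathbb{R}^d}e^{-i t\cdot\xi}\,d\mu^*(t)$ belongs to $L^1(\mathbb{R}^d)$. Let $\psi\in C(\mathbb{R}^d)$ be nonnegative with $\int_{\mathbb{R}^d}\psi(x)\,dx=1$, $\int_{\mathbb{R}^d}|x|\psi(x)\,dx<\infty$, and $\psi(x)\ge C_\psi$ for all $|x|\le 1$, for some constant $C_\psi>0$. For $h>0$ set $\psi_h(x)=h^{-d}\psi(x/h)$. *)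

theory Defs
  imports "HOL-Probability.Probability"
begin

definition fourier_measure :: "'a::euclidean_space measure \<Rightarrow> 'a \<Rightarrow> complex" where
  "fourier_measure M \<xi> = (LINT t|M. cis (- (t \<bullet> \<xi>)))"

definition kernel_scale :: "('a::euclidean_space \<Rightarrow> real) \<Rightarrow> real \<Rightarrow> 'a \<Rightarrow> real" where
  "kernel_scale \<psi> h x = (1 / h) ^ DIM('a) * \<psi> ((1 / h) *\<^sub>R x)"

end

theory Submission
  imports Defs
begin

text \<open>
  Since the Fourier transform of \<open>\<mu>\<^sup>*\<close> is integrable, \<open>\<mu>\<^sup>*\<close> has a density bounded by
  \<open>K = (2\<pi>)\<^sup>-\<^sup>d\<close> times the \<open>L\<^sup>1\<close> norm of that transform, so
  \<open>\<integral> F d\<mu> \<le> \<integral> F d\<mu>\<^sup>* \<le> K \<integral> F dt\<close> for continuous \<open>F \<ge> 0\<close>. For \<open>F t = |(x - t)/h|\<^sup>j \<psi>\<^sub>h(x - t)\<close>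
  the substitution \<open>w = (x - t)/h\<close> turns \<open>\<integral> F dt\<close> into \<open>\<integral> |w|\<^sup>j \<psi>(w) dw\<close>, which is
  independent of \<open>x\<close> and \<open>h\<close>.
  The density bound is obtained without a Fourier inversion theorem: the Gaussian kernel
  \<open>g\<^sub>s\<close> is itself a Fourier integral, so Fubini gives \<open>(g\<^sub>s * \<mu>\<^sup>*)(x) \<le> K\<close>; as \<open>s \<rightarrow> 0\<close>,
  \<open>g\<^sub>s * F \<rightarrow> F\<close> pointwise for continuous \<open>F\<close>, and Fatou's lemma concludes.
\<close>

lemma integrable_gaussian_cis:
  fixes s w :: real
  assumes s: "s > 0"
  shows "integrable lborel (\<lambda>\<xi>. complex_of_real (exp (-(s^2 * \<xi>^2)/2)) * cis (w * \<xi>))"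
proof -
  have "integrable lborel (\<lambda>x. std_normal_density x * \<bar>x\<bar>^0)"
    by (rule integrable_std_normal_moment_abs)
  then have "integrable lborel (\<lambda>x. std_normal_density (0 + s * x))"
    using s by (intro lborel_integrable_real_affine) auto
  then have bound: "integrable lborel (\<lambda>x. sqrt (2*pi) * std_normal_density (s * x))"
    by simp
  show ?thesis
  proof (rule Bochner_Integration.integrable_bound[OF bound])
    show "AE x in lborel. norm (complex_of_real (exp (-(s^2 * x^2)/2)) * cis (w * x))
        \<le> norm (sqrt (2*pi) * std_normal_density (s * x))"
      by (auto simp: std_normal_density_def norm_mult power_mult_distrib)
  qed (simp, intro borel_measurable_continuous_onI continuous_intros; simp)
qed

lemma integral_gaussian_cis:
  fixes s w :: real
  assumes s: "s > 0"
  shows "(\<integral>\<xi>. complex_of_real (exp (-(s^2 * \<xi>^2)/2)) * cis (w * \<xi>) \<partial>lborel)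
     = complex_of_real (sqrt (2*pi) / s * exp (-(w^2) / (2 * s^2)))"
proof -
  have "complex_of_real (exp (- ((w/s)^2) / 2)) = char std_normal_distribution (w/s)"
    by (simp add: char_std_normal_distribution)
  also have "\<dots> = (\<integral>x. std_normal_density x *\<^sub>R iexp (w/s * x) \<partial>lborel)"
    unfolding char_def by (subst integral_density) (auto simp: normal_density_nonneg)
  also have "\<dots> = \<bar>s\<bar> *\<^sub>R (\<integral>x. std_normal_density (0 + s * x) *\<^sub>R iexp (w/s * (0 + s * x)) \<partial>lborel)"
    using s by (intro lborel_integral_real_affine) auto
  also have "(\<lambda>x. std_normal_density (0 + s * x) *\<^sub>R iexp (w/s * (0 + s * x)))
     = (\<lambda>x. (1 / sqrt (2*pi)) *\<^sub>R (complex_of_real (exp (-(s^2 * x^2)/2)) * cis (w * x)))"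
    using s by (auto simp: fun_eq_iff std_normal_density_def cis_conv_exp power_mult_distrib
        scaleR_conv_of_real)
  finally show ?thesis
    using s by (simp add: scaleR_conv_of_real field_simps power_divide power2_eq_square)
qed

lemma
  fixes f :: "'a::euclidean_space \<Rightarrow> real \<Rightarrow> 'b::{banach, second_countable_topology, real_normed_field}"
  assumes int: "\<And>b. b \<in> Basis \<Longrightarrow> integrable lborel (f b)"
  shows integrable_lborel_prod: "integrable lborel (\<lambda>x::'a. \<Prod>b\<in>Basis. f b (x \<bullet> b))"
    and integral_lborel_prod:
      "(\<integral>x. (\<Prod>b\<in>Basis. f b (x \<bullet> b)) \<partial>lborel) = (\<Prod>b\<in>Basis. integral\<^sup>L lborel (f b))"
proof -
  interpret P: product_sigma_finite "\<lambda>_::'a. lborel :: real measure"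
    by (simp add: product_sigma_finite_def lborel.sigma_finite_measure_axioms)
  have [measurable]: "\<And>b. b \<in> Basis \<Longrightarrow> f b \<in> borel_measurable borel"
    using int by (simp add: borel_measurable_integrable)
  have T: "(\<lambda>g. \<Sum>b\<in>Basis. g b *\<^sub>R b) \<in> measurable (\<Pi>\<^sub>M b\<in>Basis. lborel) (borel :: 'a measure)"
    by measurable
  have coords: "(\<Prod>b\<in>Basis. f b ((\<Sum>c\<in>Basis. g c *\<^sub>R c) \<bullet> b)) = (\<Prod>b\<in>Basis. f b (g b))" for g
    by (intro prod.cong refl) (simp add: inner_sum_left inner_Basis if_distrib cong: if_cong)
  have meas: "(\<lambda>x::'a. \<Prod>b\<in>Basis. f b (x \<bullet> b)) \<in> borel_measurable borel"
    by measurable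
  have "integrable (\<Pi>\<^sub>M b\<in>Basis. lborel) (\<lambda>g. \<Prod>b\<in>Basis. f b (g b))"
    by (intro P.product_integrable_prod int) auto
  then show "integrable lborel (\<lambda>x::'a. \<Prod>b\<in>Basis. f b (x \<bullet> b))"
    by (subst lborel_eq, subst integrable_distr_eq[OF T meas]) (simp add: coords)
  show "(\<integral>x. (\<Prod>b\<in>Basis. f b (x \<bullet> b)) \<partial>lborel) = (\<Prod>b\<in>Basis. integral\<^sup>L lborel (f b))"
    by (subst lborel_eq, subst integral_distr[OF T meas], simp add: coords)
       (intro P.product_integral_prod int; simp)
qed

lemma cis_sum: "finite A \<Longrightarrow> cis (\<Sum>i\<in>A. g i) = (\<Prod>i\<in>A. cis (g i))"
  by (induction A rule: finite_induct) (auto simp: cis_mult[symmetric])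

lemma exp_mult_norm_power2:
  fixes x :: "'a::euclidean_space"
  shows "exp (c * (norm x)^2) = (\<Prod>b\<in>Basis. exp (c * (x \<bullet> b)^2))"
proof -
  have "(norm x)^2 = (\<Sum>b\<in>Basis. (x \<bullet> b)^2)"
    unfolding power2_norm_eq_inner by (subst euclidean_inner) (simp add: power2_eq_square)
  then show ?thesis
    by (simp add: sum_distrib_left exp_sum)
qed

lemma
  fixes y :: "'a::euclidean_space" and s :: real
  assumes s: "s > 0"
  shows integrable_gaussian_cis_euclidean:
      "integrable lborel (\<lambda>\<xi>::'a. complex_of_real (exp (-(s^2 * (norm \<xi>)^2)/2)) * cis (y \<bullet> \<xi>))"
    and integral_gaussian_cis_euclidean:
      "(\<integral>\<xi>. complex_of_real (exp (-(s^2 * (norm \<xi>)^2)/2)) * cis (y \<bullet> \<xi>) \<partial>lborel)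
        = complex_of_real ((sqrt (2*pi) / s)^DIM('a) * exp (-((norm y)^2) / (2 * s^2)))"
proof -
  define f where "f b x = complex_of_real (exp (-(s^2 * x^2)/2)) * cis ((y \<bullet> b) * x)"
    for b :: 'a and x :: real
  have prod_form: "(\<lambda>\<xi>::'a. complex_of_real (exp (-(s^2 * (norm \<xi>)^2)/2)) * cis (y \<bullet> \<xi>))
      = (\<lambda>\<xi>. \<Prod>b\<in>Basis. f b (\<xi> \<bullet> b))"
  proof
    fix \<xi> :: 'a
    have gauss: "exp (-(s^2 * (norm \<xi>)^2)/2) = (\<Prod>b\<in>Basis. exp (-(s^2 * (\<xi> \<bullet> b)^2)/2))"
      using exp_mult_norm_power2[of "-(s^2)/2" \<xi>] by simp
    have inner: "y \<bullet> \<xi> = (\<Sum>b\<in>Basis. (y \<bullet> b) * (\<xi> \<bullet> b))"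
      by (simp add: euclidean_inner[of y \<xi>])
    show "complex_of_real (exp (-(s^2 * (norm \<xi>)^2)/2)) * cis (y \<bullet> \<xi>)
        = (\<Prod>b\<in>Basis. f b (\<xi> \<bullet> b))"
      unfolding f_def prod.distrib gauss inner of_real_prod cis_sum[OF finite_Basis] ..
  qed
  have int: "\<And>b. b \<in> Basis \<Longrightarrow> integrable lborel (f b)"
    unfolding f_def using integrable_gaussian_cis[OF s] by blast
  show "integrable lborel (\<lambda>\<xi>::'a. complex_of_real (exp (-(s^2 * (norm \<xi>)^2)/2)) * cis (y \<bullet> \<xi>))"
    unfolding prod_form by (rule integrable_lborel_prod[OF int])
  have "(\<integral>\<xi>. complex_of_real (exp (-(s^2 * (norm \<xi>)^2)/2)) * cis (y \<bullet> \<xi>) \<partial>lborel)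
      = (\<Prod>b\<in>Basis. integral\<^sup>L lborel (f b))"
    unfolding prod_form by (rule integral_lborel_prod[OF int])
  also have "\<dots> = (\<Prod>b\<in>Basis. complex_of_real (sqrt (2*pi) / s * exp (-((y \<bullet> b)^2) / (2 * s^2))))"
    unfolding f_def integral_gaussian_cis[OF s] ..
  also have "\<dots> = complex_of_real ((sqrt (2*pi) / s)^DIM('a) * exp (-((norm y)^2) / (2 * s^2)))"
  proof -
    have "exp (-((norm y)^2) / (2 * s^2)) = (\<Prod>b\<in>Basis. exp (-((y \<bullet> b)^2) / (2 * s^2)))"
      using exp_mult_norm_power2[of "-1/(2 * s^2)" y] by simp
    then show ?thesis
      unfolding of_real_prod[symmetric] prod.distrib prod_constant by simp
  qed
  finally show "(\<integral>\<xi>. complex_of_real (exp (-(s^2 * (norm \<xi>)^2)/2)) * cis (y \<bullet> \<xi>) \<partial>lborel)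
        = complex_of_real ((sqrt (2*pi) / s)^DIM('a) * exp (-((norm y)^2) / (2 * s^2)))" .
qed

definition gauss_kernel :: "real \<Rightarrow> 'a::euclidean_space \<Rightarrow> real" where
  "gauss_kernel s y = (1 / (sqrt (2*pi) * s))^DIM('a) * exp (-((norm y)^2) / (2 * s^2))"

lemma gauss_kernel_nonneg: "s > 0 \<Longrightarrow> gauss_kernel s y \<ge> 0"
  by (simp add: gauss_kernel_def)

lemma gauss_kernel_le: "s > 0 \<Longrightarrow> gauss_kernel s y \<le> (1 / (sqrt (2*pi) * s))^DIM('a)"
  for y :: "'a::euclidean_space"
  unfolding gauss_kernel_def by (intro mult_left_le) auto

lemma continuous_on_gauss_kernel: "continuous_on UNIV (gauss_kernel s)"
  unfolding gauss_kernel_def divide_inverse by (intro continuous_intros)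

lemma borel_measurable_gauss_kernel[measurable]: "gauss_kernel s \<in> borel_measurable borel"
  by (intro borel_measurable_continuous_onI continuous_on_gauss_kernel)

lemma gauss_kernel_minus_commute: "gauss_kernel s (x - t) = gauss_kernel s (t - x)"
  by (simp add: gauss_kernel_def norm_minus_commute)

lemma gauss_kernel_rescale:
  fixes y :: "'a::euclidean_space"
  assumes s: "s > 0"
  shows "gauss_kernel s y = (1 / s)^DIM('a) * gauss_kernel 1 ((1 / s) *\<^sub>R y)"
proof -
  have "-((norm y)^2) / (2 * s^2) = -((norm ((1 / s) *\<^sub>R y))^2) / (2 * 1^2)"
    using s by (simp add: power_mult_distrib power_divide)
  moreover have "(1 / (sqrt (2*pi) * s))^DIM('a) = (1 / s)^DIM('a) * (1 / (sqrt (2*pi) * 1))^DIM('a)"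
    by (simp add: power_mult_distrib[symmetric] mult.commute)
  ultimately show ?thesis
    unfolding gauss_kernel_def by simp
qed

lemma gauss_kernel_eq_fourier_integral:
  fixes y :: "'a::euclidean_space"
  assumes s: "s > 0"
  shows "gauss_kernel s y
    = (1/(2*pi))^DIM('a) * Re (\<integral>\<xi>. complex_of_real (exp (-(s^2 * (norm \<xi>)^2)/2)) * cis (y \<bullet> \<xi>) \<partial>lborel)"
proof -
  have "1 / (sqrt (2*pi) * s) = 1/(2*pi) * (sqrt (2*pi) / s)"
    using s by (simp add: field_simps)
  then have "(1 / (sqrt (2*pi) * s))^DIM('a) = (1/(2*pi))^DIM('a) * (sqrt (2*pi) / s)^DIM('a)"
    by (simp only: power_mult_distrib)
  then show ?thesis
    unfolding integral_gaussian_cis_euclidean[OF s] gauss_kernel_def by simp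
qed

lemma nn_integral_gauss_kernel:
  assumes s: "s > 0"
  shows "(\<integral>\<^sup>+w. ennreal (gauss_kernel s (w::'a::euclidean_space)) \<partial>lborel) = 1"
proof -
  have s': "1 / s > 0" using s by simp
  have gauss: "exp (-((norm w)^2) / (2 * s^2)) = Re (complex_of_real (exp (-((1/s)^2 * (norm w)^2)/2)) * cis (0 \<bullet> w))"
    for w :: 'a
    by (simp add: power_divide)
  have "integrable lborel (\<lambda>w::'a. exp (-((norm w)^2) / (2 * s^2)))"
    unfolding gauss by (intro integrable_Re integrable_gaussian_cis_euclidean[OF s'])
  then have int: "integrable lborel (gauss_kernel s :: 'a \<Rightarrow> real)"
    unfolding gauss_kernel_def by simp
  have "(\<integral>w. exp (-((norm w)^2) / (2 * s^2)) \<partial>(lborel :: 'a measure)) = (sqrt (2*pi) * s)^DIM('a)"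
    unfolding gauss integral_Re[OF integrable_gaussian_cis_euclidean[OF s']]
      integral_gaussian_cis_euclidean[OF s']
    by simp
  then have "(\<integral>w. gauss_kernel s (w::'a) \<partial>lborel) = 1"
    using s unfolding gauss_kernel_def by (simp add: power_mult_distrib[symmetric])
  with int show ?thesis
    using gauss_kernel_nonneg[OF s] by (subst nn_integral_eq_integral) auto
qed

lemma nn_integral_lborel_rescale:
  fixes f :: "'a::euclidean_space \<Rightarrow> ennreal"
  assumes [measurable]: "f \<in> borel_measurable borel" and h: "h > 0"
  shows "(\<integral>\<^sup>+t. ennreal ((1 / h)^DIM('a)) * f ((1 / h) *\<^sub>R (x - t)) \<partial>lborel) = (\<integral>\<^sup>+w. f w \<partial>lborel)"
proof -
  have "(\<integral>\<^sup>+w. f w \<partial>lborel)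
      = ennreal (\<bar>- (1 / h)\<bar>^DIM('a)) * (\<integral>\<^sup>+t. f ((1 / h) *\<^sub>R x + (- (1 / h)) *\<^sub>R t) \<partial>lborel)"
    using h by (subst lborel_affine[of "- (1 / h)" "(1 / h) *\<^sub>R x"])
      (simp_all add: nn_integral_density nn_integral_distr nn_integral_cmult)
  also have "\<dots> = (\<integral>\<^sup>+t. ennreal ((1 / h)^DIM('a)) * f ((1 / h) *\<^sub>R (x - t)) \<partial>lborel)"
    using h by (subst nn_integral_cmult) (simp_all add: scaleR_diff_right)
  finally show ?thesis ..
qed

lemma nn_integral_gauss_kernel_ball:
  fixes t :: "'a::euclidean_space"
  assumes s: "s > 0"
  shows "(\<integral>\<^sup>+z. ennreal (gauss_kernel s (t - z) * indicator (ball t r) z) \<partial>lborel)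
    = (\<integral>\<^sup>+w. ennreal (gauss_kernel 1 (w::'a) * indicator (ball 0 (r / s)) w) \<partial>lborel)"
proof -
  have [measurable]: "ball x \<rho> \<in> sets borel" for x :: 'a and \<rho>
    by simp
  define f where "f w = ennreal (gauss_kernel 1 w * indicator (ball 0 (r / s)) w)" for w :: 'a
  have "indicator (ball t r) z = (indicator (ball 0 (r / s)) ((1 / s) *\<^sub>R (t - z)) :: real)" for z :: 'a
    using s by (simp add: indicator_def dist_norm divide_less_cancel)
  then have eq: "ennreal (gauss_kernel s (t - z) * indicator (ball t r) z)
      = ennreal ((1 / s)^DIM('a)) * f ((1 / s) *\<^sub>R (t - z))" for z
    using s by (simp add: f_def gauss_kernel_rescale[OF s, of "t - z"] ennreal_mult'[symmetric] mult.assoc)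
  have "f \<in> borel_measurable borel"
    unfolding f_def by measurable
  then show ?thesis
    unfolding eq f_def[symmetric] using s by (rule nn_integral_lborel_rescale)
qed

lemma gauss_kernel_ball_mass_tendsto:
  fixes t :: "'a::euclidean_space"
  assumes r: "r > 0"
  shows "(\<lambda>n. \<integral>\<^sup>+z. ennreal (gauss_kernel (1 / Suc n) (t - z) * indicator (ball t r) z) \<partial>lborel)
    \<longlonglongrightarrow> 1"
proof -
  have [measurable]: "ball x \<rho> \<in> sets borel" for x :: 'a and \<rho>
    by simp
  let ?mass = "\<lambda>n. \<integral>\<^sup>+w. ennreal (gauss_kernel 1 w * indicator (ball (0::'a) (r * Suc n)) w) \<partial>lborel"
  have "?mass \<longlonglongrightarrow> (\<integral>\<^sup>+w. ennreal (gauss_kernel 1 (w::'a)) \<partial>lborel)"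
  proof (rule nn_integral_LIMSEQ)
    show "incseq (\<lambda>n w. ennreal (gauss_kernel 1 (w::'a) * indicator (ball 0 (r * Suc n)) w))"
      using r gauss_kernel_nonneg[of 1]
      by (intro incseq_SucI le_funI ennreal_leI mult_left_mono) (auto simp: indicator_def algebra_simps)
    fix w :: 'a
    obtain N :: nat where "norm w / r < N"
      using reals_Archimedean2 by blast
    moreover have "r * N \<le> r * Suc n" if "n \<ge> N" for n
      using r that by (intro mult_left_mono) auto
    ultimately have "\<forall>n\<ge>N. norm w < r * Suc n"
      using r by (auto simp: field_simps intro: less_le_trans)
    then have "\<forall>\<^sub>F n in sequentially.
        ennreal (gauss_kernel 1 w * indicator (ball 0 (r * Suc n)) w) = ennreal (gauss_kernel 1 w)"
      unfolding eventually_sequentially by (intro exI[of _ N]) (auto simp: indicator_def)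
    then show "(\<lambda>n. ennreal (gauss_kernel 1 w * indicator (ball 0 (r * Suc n)) w))
        \<longlonglongrightarrow> ennreal (gauss_kernel 1 w)"
      by (rule tendsto_eventually)
  qed simp
  moreover have "(\<integral>\<^sup>+z. ennreal (gauss_kernel (1 / Suc n) (t - z) * indicator (ball t r) z) \<partial>lborel)
      = ?mass n" for n
    by (subst nn_integral_gauss_kernel_ball) simp_all
  ultimately show ?thesis
    unfolding nn_integral_gauss_kernel[OF zero_less_one] by simp
qed

lemma ennreal_le_liminf_gauss_convolution:
  fixes F :: "'a::euclidean_space \<Rightarrow> real" and t :: 'a
  assumes F: "continuous_on UNIV F"
  shows "ennreal (F t) \<le> liminf (\<lambda>n. \<integral>\<^sup>+y. ennreal (gauss_kernel (1 / Suc n) (t - y) * F y) \<partial>lborel)"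
  unfolding le_Liminf_iff
proof (intro allI impI)
  fix a assume "a < ennreal (F t)"
  then obtain a' where a: "a = ennreal a'" "0 \<le> a'" "a' < F t"
    by (cases a rule: ennreal_cases) (auto simp: ennreal_less_iff)
  define c where "c = (a' + F t) / 2"
  have c: "a' < c" "c < F t" "0 < c"
    using a by (auto simp: c_def)
  obtain r where r: "r > 0" and near: "\<And>z. dist z t < r \<Longrightarrow> dist (F z) (F t) < F t - c"
    using F c unfolding continuous_on_iff by (metis UNIV_I diff_gt_0_iff_gt)
  have [measurable]: "ball t r \<in> sets borel"
    by simp
  have F_ball: "c < F z" if "z \<in> ball t r" for z
    using near[of z] that by (simp add: dist_commute dist_real_def abs_less_iff)
  define mass where
    "mass n = (\<integral>\<^sup>+z. ennreal (gauss_kernel (1 / Suc n) (t - z) * indicator (ball t r) z) \<partial>lborel)"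
    for n :: nat
  have lower: "ennreal c * mass n \<le> (\<integral>\<^sup>+y. ennreal (gauss_kernel (1 / Suc n) (t - y) * F y) \<partial>lborel)"
    for n
  proof -
    have "ennreal c * mass n
        = (\<integral>\<^sup>+z. ennreal (c * (gauss_kernel (1 / Suc n) (t - z) * indicator (ball t r) z)) \<partial>lborel)"
      unfolding mass_def using c by (subst nn_integral_cmult[symmetric]) (simp_all add: ennreal_mult')
    also have "\<dots> \<le> (\<integral>\<^sup>+y. ennreal (gauss_kernel (1 / Suc n) (t - y) * F y) \<partial>lborel)"
      using F_ball[THEN less_imp_le] gauss_kernel_nonneg[of "1 / Suc n"]
      by (intro nn_integral_mono)
        (auto simp: indicator_def mult.commute[of c] intro!: ennreal_leI mult_left_mono)
    finally show ?thesis .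
  qed
  have "(\<lambda>n. ennreal c * mass n) \<longlonglongrightarrow> ennreal c * 1"
    unfolding mass_def by (intro ennreal_tendsto_cmult gauss_kernel_ball_mass_tendsto r) simp
  moreover have "a < ennreal c * 1"
    using a c by (simp add: ennreal_lessI)
  ultimately have "\<forall>\<^sub>F n in sequentially. a < ennreal c * mass n"
    by (rule order_tendstoD(1))
  then show "\<forall>\<^sub>F n in sequentially. a < (\<integral>\<^sup>+y. ennreal (gauss_kernel (1 / Suc n) (t - y) * F y) \<partial>lborel)"
    by eventually_elim (use lower in \<open>blast intro: less_le_trans\<close>)
qed

definition fourier_density_bound :: "'a::euclidean_space measure \<Rightarrow> real" where
  "fourier_density_bound M = (1/(2*pi))^DIM('a) * (\<integral>\<xi>. norm (fourier_measure M \<xi>) \<partial>lborel)"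

lemma integral_gauss_kernel_eq_fourier_measure:
  fixes M :: "'a::euclidean_space measure"
  assumes "finite_measure M" and sets_M: "sets M = sets borel" and s: "s > 0"
  shows "(\<integral>t. gauss_kernel s (x - t) \<partial>M) = (1/(2*pi))^DIM('a) *
    Re (\<integral>\<xi>. complex_of_real (exp (-(s^2 * (norm \<xi>)^2)/2)) * cis (x \<bullet> \<xi>) * fourier_measure M \<xi> \<partial>lborel)"
proof -
  interpret finite_measure M by fact
  interpret pair_sigma_finite M "lborel :: 'a measure"
    by (simp add: pair_sigma_finite_def lborel.sigma_finite_measure_axioms sigma_finite_measure_axioms)
  define G where "G \<xi> = exp (-(s^2 * (norm \<xi>)^2)/2)" for \<xi> :: 'a
  define \<Phi> where "\<Phi> t \<xi> = complex_of_real (G \<xi>) * cis ((x - t) \<bullet> \<xi>)" for t \<xi> :: 'a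
  have G_int: "integrable lborel G"
    using integrable_Re[OF integrable_gaussian_cis_euclidean[OF s, of 0]] by (simp add: G_def[abs_def])
  have "(\<lambda>p. \<Phi> (fst p) (snd p)) \<in> borel_measurable borel"
    unfolding \<Phi>_def G_def by (intro borel_measurable_continuous_onI continuous_intros; simp)
  moreover have "sets (M \<Otimes>\<^sub>M lborel) = sets (borel :: ('a \<times> 'a) measure)"
    using sets_M by (simp add: borel_prod[symmetric] cong: sets_pair_measure_cong)
  ultimately have \<Phi>_meas: "case_prod \<Phi> \<in> borel_measurable (M \<Otimes>\<^sub>M lborel)"
    unfolding case_prod_beta' using measurable_cong_sets by blast
  have "(\<lambda>t. \<integral>\<xi>. norm (\<Phi> t \<xi>) \<partial>lborel) = (\<lambda>t. \<integral>\<xi>. G \<xi> \<partial>lborel)"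
    by (simp add: \<Phi>_def G_def norm_mult)
  moreover have "integrable lborel (\<Phi> t)" for t
    unfolding \<Phi>_def G_def by (rule integrable_gaussian_cis_euclidean[OF s])
  ultimately have \<Phi>_int: "integrable (M \<Otimes>\<^sub>M lborel) (case_prod \<Phi>)"
    using \<Phi>_meas by (intro Fubini_integrable) simp_all
  have "(\<integral>t. gauss_kernel s (x - t) \<partial>M) = (\<integral>t. (1/(2*pi))^DIM('a) * Re (\<integral>\<xi>. \<Phi> t \<xi> \<partial>lborel) \<partial>M)"
    unfolding \<Phi>_def G_def gauss_kernel_eq_fourier_integral[OF s] ..
  also have "\<dots> = (1/(2*pi))^DIM('a) * Re (\<integral>t. (\<integral>\<xi>. \<Phi> t \<xi> \<partial>lborel) \<partial>M)"
    using integrable_fst'[OF \<Phi>_int] by (simp add: case_prod_beta' integral_Re)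
  also have "(\<integral>t. (\<integral>\<xi>. \<Phi> t \<xi> \<partial>lborel) \<partial>M) = (\<integral>\<xi>. (\<integral>t. \<Phi> t \<xi> \<partial>M) \<partial>lborel)"
    using Fubini_integral[OF \<Phi>_int] by simp
  also have "\<dots> = (\<integral>\<xi>. complex_of_real (G \<xi>) * cis (x \<bullet> \<xi>) * fourier_measure M \<xi> \<partial>lborel)"
  proof (intro Bochner_Integration.integral_cong refl)
    fix \<xi> :: 'a
    have "\<Phi> t \<xi> = (complex_of_real (G \<xi>) * cis (x \<bullet> \<xi>)) * cis (- (t \<bullet> \<xi>))" for t
      by (simp add: \<Phi>_def cis_mult inner_diff_left)
    then show "(\<integral>t. \<Phi> t \<xi> \<partial>M) = complex_of_real (G \<xi>) * cis (x \<bullet> \<xi>) * fourier_measure M \<xi>"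
      unfolding fourier_measure_def by simp
  qed
  finally show ?thesis
    by (simp add: G_def)
qed

lemma nn_integral_gauss_kernel_le_fourier_density_bound:
  fixes M :: "'a::euclidean_space measure"
  assumes M: "finite_measure M" and sets_M: "sets M = sets borel"
    and four: "integrable lborel (fourier_measure M)" and s: "s > 0"
  shows "(\<integral>\<^sup>+t. ennreal (gauss_kernel s (x - t)) \<partial>M) \<le> ennreal (fourier_density_bound M)"
proof -
  interpret finite_measure M by fact
  let ?H = "\<lambda>\<xi>. complex_of_real (exp (-(s^2 * (norm \<xi>)^2)/2)) * cis (x \<bullet> \<xi>) * fourier_measure M \<xi>"
  have H_le: "norm (?H \<xi>) \<le> norm (fourier_measure M \<xi>)" for \<xi>
    by (simp add: norm_mult mult_left_le_one_le)
  have [measurable]: "fourier_measure M \<in> borel_measurable borel"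
    using borel_measurable_integrable[OF four] by simp
  have "(\<lambda>\<xi>. cis (x \<bullet> \<xi>)) \<in> borel_measurable (borel :: 'a measure)"
    by (intro borel_measurable_continuous_onI continuous_intros)
  then have "?H \<in> borel_measurable lborel"
    by measurable
  then have H_int: "integrable lborel (\<lambda>\<xi>. norm (?H \<xi>))"
    using H_le by (intro Bochner_Integration.integrable_bound[OF integrable_norm[OF four]]) auto
  have "Re (integral\<^sup>L lborel ?H) \<le> norm (integral\<^sup>L lborel ?H)"
    by (rule complex_Re_le_cmod)
  also have "\<dots> \<le> (\<integral>\<xi>. norm (?H \<xi>) \<partial>lborel)"
    by (rule integral_norm_bound)
  also have "\<dots> \<le> (\<integral>\<xi>. norm (fourier_measure M \<xi>) \<partial>lborel)"
    by (intro integral_mono H_int integrable_norm[OF four] H_le)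
  finally have "(\<integral>t. gauss_kernel s (x - t) \<partial>M) \<le> fourier_density_bound M"
    unfolding integral_gauss_kernel_eq_fourier_measure[OF M sets_M s] fourier_density_bound_def
    by (intro mult_left_mono) auto
  moreover have "(\<lambda>t. gauss_kernel s (x - t)) \<in> borel_measurable M"
    unfolding measurable_cong_sets[OF sets_M refl] by measurable
  then have "integrable M (\<lambda>t. gauss_kernel s (x - t))"
    using gauss_kernel_le[OF s, of "x - t" for t] gauss_kernel_nonneg[OF s, of "x - t" for t]
    by (intro integrable_const_bound[where B="(1 / (sqrt (2*pi) * s))^DIM('a)"]) auto
  ultimately show ?thesis
    using gauss_kernel_nonneg[OF s] by (subst nn_integral_eq_integral) (auto intro: ennreal_leI)
qed

lemma nn_integral_gauss_convolution_le:
  fixes M :: "'a::euclidean_space measure" and F :: "'a \<Rightarrow> real"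
  assumes M: "finite_measure M" and sets_M: "sets M = sets borel"
    and four: "integrable lborel (fourier_measure M)" and s: "s > 0"
    and [measurable]: "F \<in> borel_measurable borel"
  shows "(\<integral>\<^sup>+t. (\<integral>\<^sup>+y. ennreal (gauss_kernel s (t - y) * F y) \<partial>lborel) \<partial>M)
    \<le> ennreal (fourier_density_bound M) * (\<integral>\<^sup>+y. ennreal (F y) \<partial>lborel)"
proof -
  interpret finite_measure M by fact
  interpret pair_sigma_finite M "lborel :: 'a measure"
    by (simp add: pair_sigma_finite_def lborel.sigma_finite_measure_axioms sigma_finite_measure_axioms)
  have sets_prod: "sets (M \<Otimes>\<^sub>M lborel) = sets (borel \<Otimes>\<^sub>M (borel :: 'a measure))"
    using sets_M by (simp cong: sets_pair_measure_cong)
  have split: "ennreal (gauss_kernel s (t - y) * F y) = ennreal (gauss_kernel s (y - t)) * ennreal (F y)"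
    for t y
    unfolding gauss_kernel_minus_commute[of s t y] using gauss_kernel_nonneg[OF s] by (rule ennreal_mult')
  have "(\<lambda>(t, y). ennreal (gauss_kernel s (y - t)) * ennreal (F y)) \<in> borel_measurable (M \<Otimes>\<^sub>M lborel)"
    unfolding measurable_cong_sets[OF sets_prod refl] by measurable
  then have "(\<integral>\<^sup>+t. (\<integral>\<^sup>+y. ennreal (gauss_kernel s (t - y) * F y) \<partial>lborel) \<partial>M)
      = (\<integral>\<^sup>+y. (\<integral>\<^sup>+t. ennreal (gauss_kernel s (y - t)) * ennreal (F y) \<partial>M) \<partial>lborel)"
    unfolding split by (rule Fubini'[symmetric])
  also have "\<dots> = (\<integral>\<^sup>+y. (\<integral>\<^sup>+t. ennreal (gauss_kernel s (y - t)) \<partial>M) * ennreal (F y) \<partial>lborel)"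
  proof (intro nn_integral_cong nn_integral_multc)
    show "(\<lambda>t. ennreal (gauss_kernel s (y - t))) \<in> borel_measurable M" for y
      unfolding measurable_cong_sets[OF sets_M refl] by measurable
  qed
  also have "\<dots> \<le> (\<integral>\<^sup>+y. ennreal (fourier_density_bound M) * ennreal (F y) \<partial>lborel)"
    by (intro nn_integral_mono mult_right_mono nn_integral_gauss_kernel_le_fourier_density_bound
        M sets_M four s) simp
  also have "\<dots> = ennreal (fourier_density_bound M) * (\<integral>\<^sup>+y. ennreal (F y) \<partial>lborel)"
    by (rule nn_integral_cmult) measurable
  finally show ?thesis .
qed

lemma nn_integral_le_fourier_density_bound:
  fixes M :: "'a::euclidean_space measure" and F :: "'a \<Rightarrow> real"
  assumes M: "finite_measure M" and sets_M: "sets M = sets borel"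
    and four: "integrable lborel (fourier_measure M)" and F: "continuous_on UNIV F"
  shows "(\<integral>\<^sup>+t. ennreal (F t) \<partial>M) \<le> ennreal (fourier_density_bound M) * (\<integral>\<^sup>+t. ennreal (F t) \<partial>lborel)"
proof -
  interpret finite_measure M by fact
  define conv where
    "conv n t = (\<integral>\<^sup>+y. ennreal (gauss_kernel (1 / Suc n) (t - y) * F y) \<partial>lborel)" for n :: nat and t :: 'a
  have [measurable]: "F \<in> borel_measurable borel"
    by (rule borel_measurable_continuous_onI[OF F])
  have "conv n \<in> borel_measurable M" for n
    unfolding conv_def measurable_cong_sets[OF sets_M refl] by measurable
  have "(\<integral>\<^sup>+t. ennreal (F t) \<partial>M) \<le> (\<integral>\<^sup>+t. liminf (\<lambda>n. conv n t) \<partial>M)"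
    unfolding conv_def by (intro nn_integral_mono ennreal_le_liminf_gauss_convolution F)
  also have "\<dots> \<le> liminf (\<lambda>n. \<integral>\<^sup>+t. conv n t \<partial>M)"
    by (rule nn_integral_liminf) fact
  also have "\<dots> \<le> ennreal (fourier_density_bound M) * (\<integral>\<^sup>+t. ennreal (F t) \<partial>lborel)"
    unfolding conv_def
    by (intro Liminf_le always_eventually allI nn_integral_gauss_convolution_le M sets_M four) simp_all
  finally show ?thesis .
qed

lemma nn_integral_kernel_scale:
  fixes \<psi> g :: "'a::euclidean_space \<Rightarrow> real"
  assumes [measurable]: "\<psi> \<in> borel_measurable borel" "g \<in> borel_measurable borel" and h: "h > 0"
  shows "(\<integral>\<^sup>+t. ennreal (g ((1 / h) *\<^sub>R (x - t)) * kernel_scale \<psi> h (x - t)) \<partial>lborel)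
    = (\<integral>\<^sup>+w. ennreal (g w * \<psi> w) \<partial>lborel)"
proof -
  have eq: "ennreal (g ((1 / h) *\<^sub>R (x - t)) * kernel_scale \<psi> h (x - t))
      = ennreal ((1 / h)^DIM('a)) * ennreal (g ((1 / h) *\<^sub>R (x - t)) * \<psi> ((1 / h) *\<^sub>R (x - t)))" for t
    using h by (simp add: kernel_scale_def ennreal_mult'[symmetric] mult_ac)
  show ?thesis
    unfolding eq by (rule nn_integral_lborel_rescale[OF _ h]) measurable
qed

lemma nn_integral_le_extension:
  assumes sets_\<mu>: "sets \<mu> = sets (restrict_space borel \<Omega>)" and \<Omega>: "\<Omega> \<in> sets borel"
    and sets_\<nu>: "sets \<nu> = sets borel" and ext: "\<And>A. A \<in> sets \<mu> \<Longrightarrow> emeasure \<nu> A = emeasure \<mu> A"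
  shows "(\<integral>\<^sup>+t. f t \<partial>\<mu>) \<le> (\<integral>\<^sup>+t. f t \<partial>\<nu>)"
proof -
  have \<Omega>_\<nu>: "\<Omega> \<inter> space \<nu> \<in> sets \<nu>"
    using \<Omega> sets_\<nu> sets_eq_imp_space_eq[OF sets_\<nu>] by simp
  have "\<mu> = restrict_space \<nu> \<Omega>"
  proof (rule measure_eqI)
    show "sets \<mu> = sets (restrict_space \<nu> \<Omega>)"
      unfolding sets_\<mu> by (rule sets_restrict_space_cong[symmetric, OF sets_\<nu>])
    fix A assume A: "A \<in> sets \<mu>"
    have "A \<subseteq> \<Omega>"
      using sets.sets_into_space[OF A] sets_eq_imp_space_eq[OF sets_\<mu>] by (simp add: space_restrict_space)
    then show "emeasure \<mu> A = emeasure (restrict_space \<nu> \<Omega>) A"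
      using ext[OF A] \<Omega>_\<nu> by (simp add: emeasure_restrict_space)
  qed
  then have "(\<integral>\<^sup>+t. f t \<partial>\<mu>) = (\<integral>\<^sup>+t. f t * indicator \<Omega> t \<partial>\<nu>)"
    using \<Omega>_\<nu> by (simp add: nn_integral_restrict_space)
  also have "\<dots> \<le> (\<integral>\<^sup>+t. f t \<partial>\<nu>)"
    by (intro nn_integral_mono) (simp add: indicator_def)
  finally show ?thesis .
qed

lemma nn_integral_kernel_scale_le:
  fixes \<mu> \<nu> :: "'a::euclidean_space measure" and \<psi> g :: "'a \<Rightarrow> real"
  assumes sets_\<mu>: "sets \<mu> = sets (restrict_space borel \<Omega>)" and \<Omega>: "\<Omega> \<in> sets borel"
    and \<nu>: "finite_measure \<nu>" and sets_\<nu>: "sets \<nu> = sets borel"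
    and ext: "\<And>A. A \<in> sets \<mu> \<Longrightarrow> emeasure \<nu> A = emeasure \<mu> A"
    and four: "integrable lborel (fourier_measure \<nu>)"
    and \<psi>: "continuous_on UNIV \<psi>" and g: "continuous_on UNIV g" and h: "h > 0"
  shows "(\<integral>\<^sup>+t. ennreal (g ((1 / h) *\<^sub>R (x - t)) * kernel_scale \<psi> h (x - t)) \<partial>\<mu>)
    \<le> ennreal (fourier_density_bound \<nu>) * (\<integral>\<^sup>+w. ennreal (g w * \<psi> w) \<partial>lborel)"
proof -
  have cont: "continuous_on UNIV (\<lambda>t. g ((1 / h) *\<^sub>R (x - t)) * kernel_scale \<psi> h (x - t))"
    unfolding kernel_scale_def
    by (intro continuous_intros continuous_on_compose2[OF \<psi>] continuous_on_compose2[OF g]) auto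
  have "(\<integral>\<^sup>+t. ennreal (g ((1 / h) *\<^sub>R (x - t)) * kernel_scale \<psi> h (x - t)) \<partial>\<mu>)
      \<le> (\<integral>\<^sup>+t. ennreal (g ((1 / h) *\<^sub>R (x - t)) * kernel_scale \<psi> h (x - t)) \<partial>\<nu>)"
    by (rule nn_integral_le_extension[OF sets_\<mu> \<Omega> sets_\<nu> ext])
  also have "\<dots> \<le> ennreal (fourier_density_bound \<nu>)
        * (\<integral>\<^sup>+t. ennreal (g ((1 / h) *\<^sub>R (x - t)) * kernel_scale \<psi> h (x - t)) \<partial>lborel)"
    by (rule nn_integral_le_fourier_density_bound[OF \<nu> sets_\<nu> four cont])
  also have "(\<integral>\<^sup>+t. ennreal (g ((1 / h) *\<^sub>R (x - t)) * kernel_scale \<psi> h (x - t)) \<partial>lborel)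
      = (\<integral>\<^sup>+w. ennreal (g w * \<psi> w) \<partial>lborel)"
    using \<psi> g by (intro nn_integral_kernel_scale h borel_measurable_continuous_onI)
  finally show ?thesis .
qed

lemma nn_integral_norm_power_le_moments:
  fixes \<psi> :: "'a::euclidean_space \<Rightarrow> real"
  assumes \<psi>_nonneg: "\<And>x. \<psi> x \<ge> 0" and "integrable lborel \<psi>"
    and "integrable lborel (\<lambda>x. norm x * \<psi> x)" and j: "j \<in> {0, 1::nat}"
  shows "(\<integral>\<^sup>+w. ennreal (norm w ^ j * \<psi> w) \<partial>lborel)
    \<le> ennreal ((\<integral>w. \<psi> w \<partial>lborel) + (\<integral>w. norm w * \<psi> w \<partial>lborel))"
proof -
  have "(\<integral>\<^sup>+w. ennreal (norm w ^ j * \<psi> w) \<partial>lborel) = ennreal (\<integral>w. norm w ^ j * \<psi> w \<partial>lborel)"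
    using assms by (intro nn_integral_eq_integral) auto
  moreover have "0 \<le> (\<integral>w. \<psi> w \<partial>lborel)" "0 \<le> (\<integral>w. norm w * \<psi> w \<partial>lborel)"
    using \<psi>_nonneg by (auto intro!: Bochner_Integration.integral_nonneg)
  ultimately show ?thesis
    using j by (auto intro!: ennreal_leI)
qed

theorem lemma2p1:
  fixes \<Omega> :: "'a::euclidean_space set"
    and \<mu> \<mu>s :: "'a measure"
    and \<psi> :: "'a \<Rightarrow> real"
    and C1 C\<psi> :: real
  assumes \<Omega>_compact: "compact \<Omega>"
    and \<Omega>_convex: "convex \<Omega>"
    and \<Omega>_lipschitz: "interior \<Omega> \<noteq> {}"
    and \<mu>_prob: "prob_space \<mu>"
    and \<mu>_sets: "sets \<mu> = sets (restrict_space borel \<Omega>)"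
    and C1_pos: "C1 > 0"
    and \<mu>_lower: "\<And>x \<alpha>. x \<in> \<Omega> \<Longrightarrow> 0 < \<alpha> \<Longrightarrow> \<alpha> \<le> 1 \<Longrightarrow>
                   measure \<mu> (\<Omega> \<inter> ball x \<alpha>) \<ge> C1 * measure lborel (ball x \<alpha>)"
    and \<mu>s_finite: "finite_measure \<mu>s"
    and \<mu>s_sets: "sets \<mu>s = sets borel"
    and \<mu>s_ext: "\<And>A. A \<in> sets \<mu> \<Longrightarrow> emeasure \<mu>s A = emeasure \<mu> A"
    and \<mu>s_fourier: "integrable lborel (fourier_measure \<mu>s)"
    and \<psi>_cont: "continuous_on UNIV \<psi>"
    and \<psi>_nonneg: "\<And>x. \<psi> x \<ge> 0"
    and \<psi>_int: "integrable lborel \<psi>"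
    and \<psi>_int1: "integral\<^sup>L lborel \<psi> = 1"
    and \<psi>_moment: "integrable lborel (\<lambda>x. norm x * \<psi> x)"
    and C\<psi>_pos: "C\<psi> > 0"
    and \<psi>_lower: "\<And>x. norm x \<le> 1 \<Longrightarrow> \<psi> x \<ge> C\<psi>"
  shows "\<exists>C>0. \<forall>x\<in>\<Omega>. \<forall>h. 0 < h \<and> h < 1 \<longrightarrow> (\<forall>j\<in>{0, 1::nat}.
           (\<integral>\<^sup>+ t. ennreal (norm ((1 / h) *\<^sub>R (x - t)) ^ j * kernel_scale \<psi> h (x - t)) \<partial>\<mu>)
             \<le> ennreal C)"
proof -
  define K where "K = fourier_density_bound \<mu>s"
  define M where "M = (\<integral>w. \<psi> w \<partial>lborel) + (\<integral>w. norm w * \<psi> w \<partial>lborel)"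
  have "K \<ge> 0"
    unfolding K_def fourier_density_bound_def by (auto intro!: Bochner_Integration.integral_nonneg)
  have "M \<ge> 0"
    unfolding M_def using \<psi>_nonneg by (auto intro!: add_nonneg_nonneg Bochner_Integration.integral_nonneg)
  have \<Omega>_borel: "\<Omega> \<in> sets borel"
    using \<Omega>_compact by (simp add: compact_imp_closed)
  have bound: "(\<integral>\<^sup>+t. ennreal (norm ((1 / h) *\<^sub>R (x - t)) ^ j * kernel_scale \<psi> h (x - t)) \<partial>\<mu>)
      \<le> ennreal (K * M)" if "0 < h" "j \<in> {0, 1::nat}" for x h j
  proof -
    have "(\<integral>\<^sup>+t. ennreal (norm ((1 / h) *\<^sub>R (x - t)) ^ j * kernel_scale \<psi> h (x - t)) \<partial>\<mu>)
        \<le> ennreal K * (\<integral>\<^sup>+w. ennreal (norm w ^ j * \<psi> w) \<partial>lborel)"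
      unfolding K_def using \<mu>_sets \<Omega>_borel \<mu>s_finite \<mu>s_sets \<mu>s_ext \<mu>s_fourier \<psi>_cont \<open>0 < h\<close>
      by (intro nn_integral_kernel_scale_le[where g="\<lambda>w. norm w ^ j"] continuous_intros)
    also have "\<dots> \<le> ennreal K * ennreal M"
      unfolding M_def using \<psi>_nonneg \<psi>_int \<psi>_moment \<open>j \<in> {0, 1}\<close>
      by (intro mult_left_mono nn_integral_norm_power_le_moments) simp_all
    also have "\<dots> = ennreal (K * M)"
      using \<open>K \<ge> 0\<close> \<open>M \<ge> 0\<close> by (intro ennreal_mult[symmetric])
    finally show ?thesis .
  qed
  have "0 < K * M + 1"
    using \<open>K \<ge> 0\<close> \<open>M \<ge> 0\<close> by (simp add: add_nonneg_pos)
  moreover have "ennreal (K * M) \<le> ennreal (K * M + 1)"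
    by (rule ennreal_leI) simp
  ultimately show ?thesis
    using bound by (meson order_trans)
qed

end
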